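(* Let $R$ be a commutative Noetherian ring, $M$ a faithful primeful $R$-module having at least one prime submodule, $X=\mathrm{Spec}(M)$, $N$ an $R$-module, $K\le M$, and $U=X\setminus V(K)$. Then the cokernel of $\epsilon_N^U:N\to\mathcal{A}(N,M)(U)$ is $(K:M)$-torsion.
   Context: For a submodule $L$ of an $R$-module $M$, $(L:M)=\{r\in R\mid rM\subseteq L\}$. A submodule $P$ of $M$ is prime if $P\neq M$ and whenever $rm\in P$ ($r\in R$, $m\in M$) then $r\in (P:M)$ or $m\in P$. $\mathrm{Spec}(M)$ is the set of prime submodules. $M$ is faithful if $\mathrm{Ann}_R(M)=0$; primeful if $M=0$ or $\mathrm{Spec}(M)\to\mathrm{Spec}(R/\mathrm{Ann}(M))$, $P\mapsto(P:M)/\mathrm{Ann}(M)$, is surjective. For $L\le M$, $V(L)=\{P\in X\mid (P:M)\supseteq (L:M)\}$; these are the closed sets of the Zariski topology. For open $U\subseteq X$, $\mathrm{Supp}(U)=\{(P:M)\mid P\in U\}$. $\mathcal{A}(N,M)(U)$ is the $R$-module of families $(\gamma_{\mathfrak p})_{\mathfrak p\in\mathrm{Supp}(U)}\in\prod_{\mathfrak p\in\mathrm{Supp}(U)}N_{\mathfrak p}$ such that for each $Q\in U$ there exist an open neighbourhood $W\subseteq U$ of $Q$ and $s\in R$, $m\in N$ with $s\notin(P:M)$ and $\gamma_{(P:M)}=m/s$ for every $P\in W$. $\epsilon_N^U(n)=(n/1)_{\mathfrak p\in\mathrm{Supp}(U)}$. A module $H$ is $I$-torsion if every element is annihilated by some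 power of $I$. *)

theory Defs
  imports Main "HOL.Modules"
begin

definition ring_ideal :: "'r::comm_ring_1 set \<Rightarrow> bool" where
  "ring_ideal I \<longleftrightarrow> 0 \<in> I \<and> (\<forall>a\<in>I. \<forall>b\<in>I. a + b \<in> I) \<and> (\<forall>r. \<forall>a\<in>I. r * a \<in> I)"

definition prime_ring_ideal :: "'r::comm_ring_1 set \<Rightarrow> bool" where
  "prime_ring_ideal p \<longleftrightarrow> ring_ideal p \<and> p \<noteq> UNIV \<and> (\<forall>a b. a * b \<in> p \<longrightarrow> a \<in> p \<or> b \<in> p)"

definition noetherian_ring :: "'r::comm_ring_1 itself \<Rightarrow> bool" where
  "noetherian_ring _ \<longleftrightarrow>
     (\<forall>f :: nat \<Rightarrow> 'r set. (\<forall>n. ring_ideal (f n)) \<and> (\<forall>n. f n \<subseteq> f (Suc n))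
        \<longrightarrow> (\<exists>N. \<forall>n\<ge>N. f n = f N))"

definition ideal_gen :: "'r::comm_ring_1 set \<Rightarrow> 'r set" where
  "ideal_gen S = \<Inter>{J. ring_ideal J \<and> S \<subseteq> J}"

definition ideal_pow :: "'r::comm_ring_1 set \<Rightarrow> nat \<Rightarrow> 'r set" where
  "ideal_pow I n = ideal_gen {(\<Prod>i<n. f i) | f. \<forall>i<n. f i \<in> I}"

definition colon :: "('r::comm_ring_1 \<Rightarrow> 'm::ab_group_add \<Rightarrow> 'm) \<Rightarrow> 'm set \<Rightarrow> 'r set" where
  "colon sc L = {r. \<forall>m. sc r m \<in> L}"

definition ann :: "('r::comm_ring_1 \<Rightarrow> 'm::ab_group_add \<Rightarrow> 'm) \<Rightarrow> 'r set" where
  "ann sc = {r. \<forall>m. sc r m = 0}"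

definition faithful_mod :: "('r::comm_ring_1 \<Rightarrow> 'm::ab_group_add \<Rightarrow> 'm) \<Rightarrow> bool" where
  "faithful_mod sc \<longleftrightarrow> ann sc = {0}"

definition prime_submodule :: "('r::comm_ring_1 \<Rightarrow> 'm::ab_group_add \<Rightarrow> 'm) \<Rightarrow> 'm set \<Rightarrow> bool" where
  "prime_submodule sc P \<longleftrightarrow> module.subspace sc P \<and> P \<noteq> UNIV \<and>
     (\<forall>r m. sc r m \<in> P \<longrightarrow> r \<in> colon sc P \<or> m \<in> P)"

definition Spec_mod :: "('r::comm_ring_1 \<Rightarrow> 'm::ab_group_add \<Rightarrow> 'm) \<Rightarrow> 'm set set" where
  "Spec_mod sc = {P. prime_submodule sc P}"

text \<open>Primeful: M = 0, or the map P \<mapsto> (P:M)/Ann(M) from Spec(M) to Spec(R/Ann(M)) is surjective.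
  Primes of R/Ann(M) are identified with the prime ideals of R containing Ann(M).\<close>
definition primeful :: "('r::comm_ring_1 \<Rightarrow> 'm::ab_group_add \<Rightarrow> 'm) \<Rightarrow> bool" where
  "primeful sc \<longleftrightarrow> (UNIV :: 'm set) = {0} \<or>
     (\<forall>p. prime_ring_ideal p \<and> ann sc \<subseteq> p \<longrightarrow> (\<exists>P\<in>Spec_mod sc. colon sc P = p))"

definition Vset :: "('r::comm_ring_1 \<Rightarrow> 'm::ab_group_add \<Rightarrow> 'm) \<Rightarrow> 'm set \<Rightarrow> 'm set set" where
  "Vset sc L = {P\<in>Spec_mod sc. colon sc L \<subseteq> colon sc P}"

definition zariski_open :: "('r::comm_ring_1 \<Rightarrow> 'm::ab_group_add \<Rightarrow> 'm) \<Rightarrow> 'm set set \<Rightarrow> bool" where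
  "zariski_open sc W \<longleftrightarrow> (\<exists>L. module.subspace sc L \<and> W = Spec_mod sc - Vset sc L)"

definition Supp_open :: "('r::comm_ring_1 \<Rightarrow> 'm::ab_group_add \<Rightarrow> 'm) \<Rightarrow> 'm set set \<Rightarrow> 'r set set" where
  "Supp_open sc U = colon sc ` U"

section \<open>Localization N_p: the fraction m/s is the equivalence class of (m,s)\<close>

definition loc_frac :: "('r::comm_ring_1 \<Rightarrow> 'n::ab_group_add \<Rightarrow> 'n) \<Rightarrow> 'r set \<Rightarrow> 'n \<Rightarrow> 'r \<Rightarrow> ('n \<times> 'r) set" where
  "loc_frac sc p m s = {(m', s'). s' \<notin> p \<and> (\<exists>u. u \<notin> p \<and> sc u (sc s' m - sc s m') = 0)}"

definition loc_smul :: "('r::comm_ring_1 \<Rightarrow> 'n::ab_group_add \<Rightarrow> 'n) \<Rightarrow> 'r set \<Rightarrow> 'r \<Rightarrow> ('n \<times> 'r) set \<Rightarrow> ('n \<times> 'r) set" where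
  "loc_smul sc p r c = (let (m, s) = (SOME x. x \<in> c) in loc_frac sc p (sc r m) s)"

definition A_sections ::
  "('r::comm_ring_1 \<Rightarrow> 'n::ab_group_add \<Rightarrow> 'n) \<Rightarrow> ('r \<Rightarrow> 'm::ab_group_add \<Rightarrow> 'm) \<Rightarrow> 'm set set
     \<Rightarrow> ('r set \<Rightarrow> ('n \<times> 'r) set) set" where
  "A_sections scN scM U = {\<gamma>.
     (\<forall>p. p \<notin> Supp_open scM U \<longrightarrow> \<gamma> p = {}) \<and>
     (\<forall>Q\<in>U. \<exists>W. zariski_open scM W \<and> Q \<in> W \<and> W \<subseteq> U \<and>
        (\<exists>s m. \<forall>P\<in>W. s \<notin> colon scM P \<and> \<gamma> (colon scM P) = loc_frac scN (colon scM P) m s))}"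

definition eps_map ::
  "('r::comm_ring_1 \<Rightarrow> 'n::ab_group_add \<Rightarrow> 'n) \<Rightarrow> ('r \<Rightarrow> 'm::ab_group_add \<Rightarrow> 'm) \<Rightarrow> 'm set set
     \<Rightarrow> 'n \<Rightarrow> ('r set \<Rightarrow> ('n \<times> 'r) set)" where
  "eps_map scN scM U n = (\<lambda>p. if p \<in> Supp_open scM U then loc_frac scN p n 1 else {})"

definition sect_smul ::
  "('r::comm_ring_1 \<Rightarrow> 'n::ab_group_add \<Rightarrow> 'n) \<Rightarrow> ('r \<Rightarrow> 'm::ab_group_add \<Rightarrow> 'm) \<Rightarrow> 'm set set
     \<Rightarrow> 'r \<Rightarrow> ('r set \<Rightarrow> ('n \<times> 'r) set) \<Rightarrow> ('r set \<Rightarrow> ('n \<times> 'r) set)" where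
  "sect_smul scN scM U r \<gamma> = (\<lambda>p. if p \<in> Supp_open scM U then loc_smul scN p r (\<gamma> p) else {})"

text \<open>Coker(epsilon_N^U) = A(N,M)(U) / Im(epsilon_N^U) is I-torsion: every class \<gamma> + Im is
  annihilated by some power I^k, i.e. I^k \<gamma> \<subseteq> Im(epsilon).\<close>
definition coker_eps_torsion ::
  "('r::comm_ring_1 \<Rightarrow> 'n::ab_group_add \<Rightarrow> 'n) \<Rightarrow> ('r \<Rightarrow> 'm::ab_group_add \<Rightarrow> 'm) \<Rightarrow> 'm set set
     \<Rightarrow> 'r set \<Rightarrow> bool" where
  "coker_eps_torsion scN scM U I \<longleftrightarrow>
     (\<forall>\<gamma>\<in>A_sections scN scM U. \<exists>k. \<forall>r\<in>ideal_pow I k.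
        sect_smul scN scM U r \<gamma> \<in> range (eps_map scN scM U))"

end

theory Submission
  imports Defs
begin

text \<open>Since M is faithful and primeful, every prime q of R is (P : M) for a prime submodule P,
  so Supp(U) is the set D((K : M)) of primes not containing (K : M), and a section \<gamma> over U
  is a family that is locally of the form m/s on basic open sets D(J). Finitely many of these,
  D(h_1), ..., D(h_t) with \<gamma> = m_i/h_i there, already cover D((K : M)), since R is Noetherian.
  On D(h_i h_j) both fractions agree, so (h_i h_j)^B (h_j m_i - h_i m_j) = 0 for one B; then the
  elements h_i^B m_i are compatible for the weights h_i^(B+1), and every
  r = \<Sum> c_i h_i^(B+1) satisfies r \<gamma> = (\<Sum> c_i h_i^B m_i)/1. Finally (K : M) lies in the
  radical of the ideal generated by the h_i^(B+1) and is finitely generated, so one of its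
  powers lies in that ideal.\<close>

interpretation rmod: module "(*) :: 'a::comm_ring_1 \<Rightarrow> 'a \<Rightarrow> 'a"
  by standard (auto simp: algebra_simps)

declare rmod.scale_scale[simp del] \<comment> \<open>a * (b * x) = (a * b) * x loops against ac_simps\<close>

lemma ring_ideal_iff_subspace: "ring_ideal I \<longleftrightarrow> rmod.subspace I"
  unfolding ring_ideal_def rmod.subspace_def by auto

lemma ideal_gen_eq_span: "ideal_gen S = rmod.span S"
  unfolding ideal_gen_def rmod.span_def hull_def ring_ideal_iff_subspace by auto

lemma ring_ideal_span [simp]: "ring_ideal (rmod.span S)"
  by (simp add: ring_ideal_iff_subspace)

lemma ring_ideal_mult_left: "ring_ideal J \<Longrightarrow> a \<in> J \<Longrightarrow> b * a \<in> J"
  unfolding ring_ideal_def by auto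

lemma ring_ideal_mult_right: "ring_ideal J \<Longrightarrow> a \<in> J \<Longrightarrow> a * b \<in> J"
  unfolding ring_ideal_def by (metis mult.commute)

lemma span_subset_ideal_iff: "ring_ideal J \<Longrightarrow> rmod.span S \<subseteq> J \<longleftrightarrow> S \<subseteq> J"
  using rmod.span_minimal rmod.span_superset ring_ideal_iff_subspace by blast

lemma prime_ring_ideal_ideal: "prime_ring_ideal p \<Longrightarrow> ring_ideal p"
  unfolding prime_ring_ideal_def by blast

lemma prime_ring_ideal_mult_notin: "prime_ring_ideal p \<Longrightarrow> x \<notin> p \<Longrightarrow> y \<notin> p \<Longrightarrow> x * y \<notin> p"
  unfolding prime_ring_ideal_def by blast

lemma prime_ring_ideal_mult_iff:
  "prime_ring_ideal p \<Longrightarrow> x * y \<in> p \<longleftrightarrow> x \<in> p \<or> y \<in> p"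
  by (metis prime_ring_ideal_ideal prime_ring_ideal_mult_notin ring_ideal_mult_left ring_ideal_mult_right)

lemma prime_ring_ideal_one_notin: "prime_ring_ideal p \<Longrightarrow> 1 \<notin> p"
  unfolding prime_ring_ideal_def ring_ideal_def by (metis UNIV_eq_I mult.right_neutral)

lemma prime_ring_ideal_power_iff:
  "prime_ring_ideal p \<Longrightarrow> x ^ Suc n \<in> p \<longleftrightarrow> x \<in> p"
  by (induction n) (simp_all add: prime_ring_ideal_mult_iff)

lemma prime_ring_ideal_power_notin: "prime_ring_ideal p \<Longrightarrow> x \<notin> p \<Longrightarrow> x ^ n \<notin> p"
  by (cases n) (simp_all add: prime_ring_ideal_one_notin prime_ring_ideal_power_iff del: power_Suc)

lemma ring_ideal_Union_chain:
  assumes "C \<noteq> {}" and ideal: "\<And>X. X \<in> C \<Longrightarrow> ring_ideal X"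
    and chain: "\<And>X Y. X \<in> C \<Longrightarrow> Y \<in> C \<Longrightarrow> X \<subseteq> Y \<or> Y \<subseteq> X"
  shows "ring_ideal (\<Union>C)"
  unfolding ring_ideal_def
proof (intro conjI ballI allI)
  show "0 \<in> \<Union>C" using assms(1) ideal unfolding ring_ideal_def by blast
  show "c * x \<in> \<Union>C" if "x \<in> \<Union>C" for c x
    using that ideal ring_ideal_mult_left by blast
  show "x + y \<in> \<Union>C" if xy: "x \<in> \<Union>C" "y \<in> \<Union>C" for x y
  proof -
    obtain X Y where XY: "X \<in> C" "Y \<in> C" "x \<in> X" "y \<in> Y" using xy by blast
    then have "x \<in> X \<union> Y" "y \<in> X \<union> Y" "X \<union> Y \<in> C"
      using chain[OF XY(1,2)] by (auto simp: sup_absorb1 sup_absorb2)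
    then show ?thesis using ideal unfolding ring_ideal_def by blast
  qed
qed

text \<open>If a, b \<notin> M, maximality puts powers of f into M + Ra and M + Rb, hence into their product,
  which lies in M + Rab = M.\<close>
lemma maximal_ideal_avoiding_powers_prime:
  assumes M: "ring_ideal M" "\<forall>n. f ^ n \<notin> M"
    and max: "\<And>X. ring_ideal X \<Longrightarrow> M \<subseteq> X \<Longrightarrow> \<forall>n. f ^ n \<notin> X \<Longrightarrow> X = M"
  shows "prime_ring_ideal M"
proof -
  have enlarge: "\<exists>n c. f ^ n - c * a \<in> M" if "a \<notin> M" for a
  proof (rule ccontr)
    assume none: "\<nexists>n c. f ^ n - c * a \<in> M"
    have span_M: "rmod.span M = M" using M(1) by (simp add: ring_ideal_iff_subspace)
    have "f ^ n \<notin> rmod.span (insert a M)" for n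
      using none unfolding rmod.span_breakdown_eq span_M by blast
    then have "rmod.span (insert a M) = M"
      using rmod.span_superset[of "insert a M"] by (intro max) auto
    then show False using that rmod.span_superset by blast
  qed
  have "a \<in> M \<or> b \<in> M" if ab: "a * b \<in> M" for a b
  proof (rule ccontr)
    assume "\<not> (a \<in> M \<or> b \<in> M)"
    then obtain n c k d where x: "f ^ n - c * a \<in> M" and y: "f ^ k - d * b \<in> M"
      using enlarge by blast
    have "f ^ (n + k) = (f ^ n - c * a) * f ^ k + (c * a) * (f ^ k - d * b) + (c * d) * (a * b)"
      by (simp add: power_add algebra_simps)
    also have "\<dots> \<in> M"
    proof -
      have "(f ^ n - c * a) * f ^ k \<in> M" "(c * a) * (f ^ k - d * b) \<in> M" "(c * d) * (a * b) \<in> M"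
        using M(1) x y ab by (simp_all add: ring_ideal_mult_left ring_ideal_mult_right)
      then show ?thesis using M(1) unfolding ring_ideal_def by blast
    qed
    finally show False using M(2) by blast
  qed
  moreover have "M \<noteq> UNIV" using M(2) by (metis UNIV_I power_0)
  ultimately show ?thesis using M(1) unfolding prime_ring_ideal_def by blast
qed

lemma exists_prime_avoiding_powers:
  fixes A :: "'a::comm_ring_1 set"
  assumes A: "ring_ideal A" and f: "\<forall>n. f ^ n \<notin> A"
  shows "\<exists>q. prime_ring_ideal q \<and> A \<subseteq> q \<and> f \<notin> q"
proof -
  define \<A> where "\<A> = {B. ring_ideal B \<and> A \<subseteq> B \<and> (\<forall>n. f ^ n \<notin> B)}"
  have "\<exists>M\<in>\<A>. \<forall>X\<in>\<A>. M \<subseteq> X \<longrightarrow> X = M"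
  proof (rule subset_Zorn_nonempty)
    show "\<A> \<noteq> {}" using A f unfolding \<A>_def by auto
    show "\<Union>C \<in> \<A>" if "C \<noteq> {}" "subset.chain \<A> C" for C
      using that ring_ideal_Union_chain[of C] unfolding subset.chain_def \<A>_def by blast
  qed
  then obtain M where "M \<in> \<A>" and max: "\<And>X. X \<in> \<A> \<Longrightarrow> M \<subseteq> X \<Longrightarrow> X = M"
    by blast
  then have M: "ring_ideal M" "A \<subseteq> M" "\<forall>n. f ^ n \<notin> M" unfolding \<A>_def by simp_all
  have "prime_ring_ideal M"
    using M(1,3) by (rule maximal_ideal_avoiding_powers_prime) (use M(2) max in \<open>auto simp: \<A>_def\<close>)
  moreover have "f \<notin> M" using M(3) by (metis power_one_right)
  ultimately show ?thesis using M(2) by blast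
qed

lemma power_mem_if_mem_primes:
  assumes J: "ring_ideal J" and f: "\<And>q. prime_ring_ideal q \<Longrightarrow> J \<subseteq> q \<Longrightarrow> f \<in> q"
  shows "\<exists>n. f ^ n \<in> J"
  using exists_prime_avoiding_powers[OF J] f by blast

text \<open>Adjoin elements of S one at a time while S is not yet in the span; by the ascending chain
  condition this stops.\<close>
lemma noetherian_span_finite_subset:
  fixes S :: "'a::comm_ring_1 set"
  assumes "noetherian_ring TYPE('a)"
  shows "\<exists>G. finite G \<and> G \<subseteq> S \<and> rmod.span G = rmod.span S"
proof -
  define next_elem :: "'a list \<Rightarrow> 'a" where
    "next_elem l = (SOME x. x \<in> S \<and> x \<notin> rmod.span (set l))" for l
  define extend :: "'a list \<Rightarrow> 'a list" where
    "extend l = (if S \<subseteq> rmod.span (set l) then l else next_elem l # l)" for l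
  define chain where "chain n = (extend ^^ n) []" for n
  have next_elem: "next_elem l \<in> S" "next_elem l \<notin> rmod.span (set l)"
    if "\<not> S \<subseteq> rmod.span (set l)" for l
    using someI_ex[of "\<lambda>x. x \<in> S \<and> x \<notin> rmod.span (set l)"] that
    unfolding next_elem_def by blast+
  have chain_Suc: "chain (Suc n) = extend (chain n)" for n
    unfolding chain_def by simp
  have chain_in_S: "set (chain n) \<subseteq> S" for n
    by (induction n) (auto simp: chain_Suc extend_def chain_def[of 0] next_elem)
  have "\<exists>N. \<forall>n\<ge>N. rmod.span (set (chain n)) = rmod.span (set (chain N))"
    using assms unfolding noetherian_ring_def
    by (elim allE impE)
      (auto simp: chain_Suc extend_def intro: rmod.span_mono[OF subset_insertI, THEN subsetD])
  then obtain N where stable: "rmod.span (set (chain (Suc N))) = rmod.span (set (chain N))"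
    by (meson le_SucI order_refl)
  have "S \<subseteq> rmod.span (set (chain N))"
  proof (rule ccontr)
    assume S: "\<not> S \<subseteq> rmod.span (set (chain N))"
    then have "next_elem (chain N) \<in> rmod.span (set (chain (Suc N)))"
      by (simp add: chain_Suc extend_def rmod.span_base)
    then show False using next_elem(2)[OF S] stable by simp
  qed
  then have "rmod.span (set (chain N)) = rmod.span S"
    using chain_in_S rmod.span_mono rmod.span_minimal rmod.subspace_span
    by (metis subset_antisym)
  then show ?thesis using chain_in_S by blast
qed

text \<open>Write each factor as c i * a + (element of span F) and expand: every term has at least e
  factors c i * a or at least k factors from span F.\<close>
lemma long_products_mem_ideal_insert:
  fixes J :: "'a::comm_ring_1 set" and T :: "'i set"
  assumes J: "ring_ideal J" and e: "a ^ e \<in> J"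
    and k: "\<And>(T::'i set) x. finite T \<Longrightarrow> k \<le> card T \<Longrightarrow> (\<forall>i\<in>T. x i \<in> rmod.span F) \<Longrightarrow>
      prod x T \<in> J"
    and T: "finite T" "k + e \<le> card T" and x: "\<forall>i\<in>T. x i \<in> rmod.span (insert a F)"
  shows "prod x T \<in> J"
proof -
  obtain c where c: "\<forall>i\<in>T. x i - c i * a \<in> rmod.span F"
    using x unfolding rmod.span_breakdown_eq by metis
  have "prod x T = (\<Prod>i\<in>T. c i * a + (x i - c i * a))" by simp
  also have "\<dots> = (\<Sum>T'\<in>Pow T. (\<Prod>i\<in>T'. c i * a) * (\<Prod>i\<in>T - T'. x i - c i * a))"
    by (rule prod_add[OF T(1)])
  also have "\<dots> \<in> J"
  proof (rule rmod.subspace_sum[OF J[unfolded ring_ideal_iff_subspace]])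
    fix T' assume "T' \<in> Pow T"
    then have T': "finite T'" "T' \<subseteq> T" using T(1) finite_subset by auto
    show "(\<Prod>i\<in>T'. c i * a) * (\<Prod>i\<in>T - T'. x i - c i * a) \<in> J"
    proof (cases "e \<le> card T'")
      case True
      then have "a ^ card T' \<in> J"
        using e J ring_ideal_mult_left[of J "a ^ e" "a ^ (card T' - e)"]
        by (simp flip: power_add)
      then have "(\<Prod>i\<in>T'. c i) * a ^ card T' \<in> J" by (rule ring_ideal_mult_left[OF J])
      then show ?thesis using J by (simp add: prod.distrib ring_ideal_mult_right)
    next
      case False
      then have "k \<le> card (T - T')" using T' T(2) by (simp add: card_Diff_subset)
      then have "(\<Prod>i\<in>T - T'. x i - c i * a) \<in> J"
        using k[of "T - T'" "\<lambda>i. x i - c i * a"] T(1) c by auto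
      then show ?thesis by (rule ring_ideal_mult_left[OF J])
    qed
  qed
  finally show ?thesis .
qed

lemma long_products_mem_ideal:
  fixes F :: "'a::comm_ring_1 set"
  assumes J: "ring_ideal J" and "finite F" and F: "\<forall>a\<in>F. \<exists>n. a ^ n \<in> J"
  shows "\<exists>k. \<forall>(T::'i set) x. finite T \<longrightarrow> k \<le> card T \<longrightarrow> (\<forall>i\<in>T. x i \<in> rmod.span F)
           \<longrightarrow> prod x T \<in> J"
  using \<open>finite F\<close> F
proof (induction F rule: finite_induct)
  case empty
  have "prod x T \<in> J" if T: "finite T" "1 \<le> card T" "\<forall>i\<in>T. x i \<in> rmod.span {}" for T :: "'i set" and x
  proof -
    obtain i where "i \<in> T" using T(2) by fastforce
    then have "prod x T = 0" using T(1,3) by (intro prod_zero) auto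
    then show ?thesis using J unfolding ring_ideal_def by simp
  qed
  then show ?case by blast
next
  case (insert a F)
  obtain e where e: "a ^ e \<in> J" using insert.prems by blast
  obtain k where k: "\<And>(T::'i set) x. finite T \<Longrightarrow> k \<le> card T \<Longrightarrow>
      (\<forall>i\<in>T. x i \<in> rmod.span F) \<Longrightarrow> prod x T \<in> J"
    using insert.IH insert.prems by blast
  show ?case using long_products_mem_ideal_insert[OF J e k] by blast
qed

lemma ideal_pow_subset_if_primes:
  fixes I J :: "'a::comm_ring_1 set"
  assumes "noetherian_ring TYPE('a)" and "ring_ideal I" "ring_ideal J"
    and V: "\<And>q. prime_ring_ideal q \<Longrightarrow> J \<subseteq> q \<Longrightarrow> I \<subseteq> q"
  shows "\<exists>k. ideal_pow I k \<subseteq> J"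
proof -
  obtain F where F: "finite F" "F \<subseteq> I" "rmod.span F = I"
    using noetherian_span_finite_subset[OF assms(1), of I] \<open>ring_ideal I\<close>
    by (auto simp: ring_ideal_iff_subspace)
  have "\<forall>a\<in>F. \<exists>n. a ^ n \<in> J"
    using F(2) V power_mem_if_mem_primes[OF \<open>ring_ideal J\<close>] by blast
  then obtain k where k: "\<And>(T::nat set) x. finite T \<Longrightarrow> k \<le> card T \<Longrightarrow>
      (\<forall>i\<in>T. x i \<in> I) \<Longrightarrow> prod x T \<in> J"
    using long_products_mem_ideal[OF \<open>ring_ideal J\<close> F(1)] F(3) by blast
  have "{(\<Prod>i<k. f i) | f. \<forall>i<k. f i \<in> I} \<subseteq> J" using k[of "{..<k}"] by auto
  then have "ideal_pow I k \<subseteq> J"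
    unfolding ideal_pow_def ideal_gen_eq_span by (simp add: span_subset_ideal_iff \<open>ring_ideal J\<close>)
  then show ?thesis ..
qed

context module
begin

lemma loc_frac_refl: "s \<notin> p \<Longrightarrow> (m, s) \<in> loc_frac scale p m s"
  unfolding loc_frac_def by (auto intro!: exI[of _ s])

lemma loc_frac_memD:
  "(b, t) \<in> loc_frac scale p a s \<Longrightarrow> t \<notin> p \<and> (\<exists>u. u \<notin> p \<and> u *s (t *s a - s *s b) = 0)"
  unfolding loc_frac_def by auto

lemma scale_diff_eq_0_iff: "c *s (x - y) = 0 \<longleftrightarrow> c *s x = c *s y"
  by (simp add: scale_right_diff_distrib)

lemma loc_frac_subset:
  assumes p: "prime_ring_ideal p" and "s \<notin> p" "w \<notin> p" and e: "w *s (t *s a - s *s b) = 0"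
  shows "loc_frac scale p a s \<subseteq> loc_frac scale p b t"
proof
  fix z assume "z \<in> loc_frac scale p a s"
  then obtain b' t' u where z: "z = (b', t')" "t' \<notin> p" "u \<notin> p" "u *s (t' *s a - s *s b') = 0"
    by (metis loc_frac_memD surj_pair)
  have "(w * u * s) *s (t' *s b) = (u * t') *s ((w * s) *s b)"
    by (simp add: ac_simps)
  also have "\<dots> = (u * t') *s ((w * t) *s a)"
    using e by (simp add: scale_diff_eq_0_iff)
  also have "\<dots> = (w * t) *s ((u * t') *s a)"
    by (simp add: ac_simps)
  also have "\<dots> = (w * t) *s ((u * s) *s b')"
    using z(4) by (simp add: scale_diff_eq_0_iff)
  also have "\<dots> = (w * u * s) *s (t *s b')"
    by (simp add: ac_simps)
  finally have "(w * u * s) *s (t' *s b - t *s b') = 0"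
    by (simp add: scale_diff_eq_0_iff)
  moreover have "w * u * s \<notin> p"
    using assms z by (simp add: prime_ring_ideal_mult_notin)
  ultimately show "z \<in> loc_frac scale p b t"
    unfolding loc_frac_def using z by blast
qed

lemma loc_frac_eqI:
  assumes "prime_ring_ideal p" "s \<notin> p" "t \<notin> p" "w \<notin> p" and "w *s (t *s a - s *s b) = 0"
  shows "loc_frac scale p a s = loc_frac scale p b t"
proof
  show "loc_frac scale p a s \<subseteq> loc_frac scale p b t"
    using assms by (intro loc_frac_subset)
  have "w *s (s *s b - t *s a) = 0" using assms(5) by (simp add: scale_diff_eq_0_iff)
  then show "loc_frac scale p b t \<subseteq> loc_frac scale p a s"
    using assms by (intro loc_frac_subset)
qed

lemma loc_frac_eqD:
  assumes "t \<notin> p" and "loc_frac scale p a s = loc_frac scale p b t"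
  shows "\<exists>u. u \<notin> p \<and> u *s (t *s a - s *s b) = 0"
  using assms loc_frac_refl[of t p b] loc_frac_memD by auto

lemma loc_frac_cancel:
  assumes "prime_ring_ideal p" "c \<notin> p" "s \<notin> p"
  shows "loc_frac scale p (c *s m) (c * s) = loc_frac scale p m s"
  using assms by (intro loc_frac_eqI[where w = 1])
    (simp_all add: prime_ring_ideal_mult_notin prime_ring_ideal_one_notin mult.commute)

lemma loc_smul_loc_frac:
  assumes p: "prime_ring_ideal p" and s: "s \<notin> p"
  shows "loc_smul scale p r (loc_frac scale p m s) = loc_frac scale p (r *s m) s"
proof -
  obtain b t where bt: "(SOME x. x \<in> loc_frac scale p m s) = (b, t)" by fastforce
  have "(SOME x. x \<in> loc_frac scale p m s) \<in> loc_frac scale p m s"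
    using loc_frac_refl[OF s] by (rule someI)
  then have "(b, t) \<in> loc_frac scale p m s" unfolding bt .
  then obtain u where t: "t \<notin> p" and u: "u \<notin> p" "u *s (t *s m - s *s b) = 0"
    using loc_frac_memD by blast
  have "(u * t) *s m = (u * s) *s b" using u(2) by (simp add: scale_diff_eq_0_iff)
  then have "r *s ((u * s) *s b) = r *s ((u * t) *s m)" by simp
  then have "u *s (s *s (r *s b) - t *s (r *s m)) = 0"
    by (simp add: scale_diff_eq_0_iff ac_simps)
  then have "loc_frac scale p (r *s b) t = loc_frac scale p (r *s m) s"
    by (rule loc_frac_eqI[OF p t s u(1)])
  then show ?thesis unfolding loc_smul_def bt by simp
qed

lemma power_annihilates_if_locally:
  assumes "\<And>q. prime_ring_ideal q \<Longrightarrow> f \<notin> q \<Longrightarrow> \<exists>u. u \<notin> q \<and> u *s z = 0"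
  shows "\<exists>b. f ^ b *s z = 0"
proof -
  have "ring_ideal {r. r *s z = 0}"
    unfolding ring_ideal_def by (auto simp: scale_left_distrib simp flip: scale_scale)
  then show ?thesis
    using exists_prime_avoiding_powers[of "{r. r *s z = 0}" f] assms by blast
qed

end

definition frac_on ::
  "('r::comm_ring_1 \<Rightarrow> 'n::ab_group_add \<Rightarrow> 'n) \<Rightarrow> ('r set \<Rightarrow> ('n \<times> 'r) set) \<Rightarrow>
    'r set \<Rightarrow> 'n \<Rightarrow> 'r \<Rightarrow> bool"
  where "frac_on sc \<gamma> J m s \<longleftrightarrow>
    (\<forall>q. prime_ring_ideal q \<and> \<not> J \<subseteq> q \<longrightarrow> s \<notin> q \<and> \<gamma> q = loc_frac sc q m s)"

context module
begin

lemma frac_on_subset: "frac_on scale \<gamma> J m s \<Longrightarrow> J' \<subseteq> J \<Longrightarrow> frac_on scale \<gamma> J' m s"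
  unfolding frac_on_def by blast

lemma frac_on_power_denominator:
  assumes \<gamma>: "frac_on scale \<gamma> {g} m s"
  shows "\<exists>a m'. frac_on scale \<gamma> {g ^ Suc a} m' (g ^ Suc a)"
proof -
  have "\<exists>a. g ^ a \<in> rmod.span {s}"
    using \<gamma> by (intro power_mem_if_mem_primes) (auto simp: frac_on_def span_subset_ideal_iff
        prime_ring_ideal_ideal)
  then obtain a d where "g ^ a = d * s" by (auto simp: rmod.span_singleton)
  then have h: "g ^ Suc a = (g * d) * s" by (simp add: mult.assoc)
  have "frac_on scale \<gamma> {g ^ Suc a} ((g * d) *s m) (g ^ Suc a)"
    unfolding frac_on_def
  proof (intro allI impI)
    fix q assume q: "prime_ring_ideal q \<and> \<not> {g ^ Suc a} \<subseteq> q"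
    then have "g \<notin> q" "g * d \<notin> q" "s \<notin> q"
      using h prime_ring_ideal_power_iff prime_ring_ideal_mult_iff by (metis insert_subset empty_subsetI)+
    with q \<gamma> show "g ^ Suc a \<notin> q \<and> \<gamma> q = loc_frac scale q ((g * d) *s m) (g ^ Suc a)"
      unfolding frac_on_def h by (simp add: loc_frac_cancel)
  qed
  then show ?thesis by blast
qed

lemma frac_on_compatible:
  assumes "frac_on scale \<gamma> {h1} m1 h1" "frac_on scale \<gamma> {h2} m2 h2"
  shows "\<exists>b. (h1 * h2) ^ b *s (h2 *s m1 - h1 *s m2) = 0"
proof (rule power_annihilates_if_locally)
  fix q assume q: "prime_ring_ideal q" "h1 * h2 \<notin> q"
  then have "h1 \<notin> q" "h2 \<notin> q" by (auto simp: prime_ring_ideal_mult_iff)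
  then have "loc_frac scale q m1 h1 = loc_frac scale q m2 h2"
    using assms q(1) unfolding frac_on_def by auto
  then show "\<exists>u. u \<notin> q \<and> u *s (h2 *s m1 - h1 *s m2) = 0"
    by (rule loc_frac_eqD[OF \<open>h2 \<notin> q\<close>])
qed

lemma compatible_family_glue:
  assumes compat: "\<And>g1 g2. g1 \<in> G \<Longrightarrow> g2 \<in> G \<Longrightarrow> e g1 *s y g2 = e g2 *s y g1"
    and "r \<in> rmod.span (e ` G)"
  shows "\<exists>n. \<forall>g\<in>G. e g *s n = r *s y g"
  using \<open>r \<in> rmod.span (e ` G)\<close>
proof (induction rule: rmod.span_induct_alt)
  case base
  show ?case by (intro exI[of _ 0]) simp
next
  case (step c x r)
  then obtain g' n where g': "g' \<in> G" "x = e g'" and n: "\<forall>g\<in>G. e g *s n = r *s y g" by blast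
  have "e g *s (c *s y g' + n) = (c * e g' + r) *s y g" if "g \<in> G" for g
  proof -
    have "e g *s (c *s y g' + n) = c *s (e g *s y g') + e g *s n"
      by (simp add: scale_right_distrib ac_simps)
    also have "\<dots> = c *s (e g' *s y g) + r *s y g"
      by (simp only: compat[OF that g'(1)] n[rule_format, OF that])
    finally show ?thesis by (simp add: scale_left_distrib)
  qed
  then show ?case using g'(2) by blast
qed

lemma frac_on_uniformly_compatible:
  assumes "finite G" and \<gamma>: "\<And>g. g \<in> G \<Longrightarrow> frac_on scale \<gamma> {h g} (m g) (h g)"
  shows "\<exists>B. \<forall>g1\<in>G. \<forall>g2\<in>G. (h g1 * h g2) ^ B *s (h g2 *s m g1 - h g1 *s m g2) = 0"
proof -
  have "\<forall>(g1, g2)\<in>G \<times> G. eventually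
      (\<lambda>B. (h g1 * h g2) ^ B *s (h g2 *s m g1 - h g1 *s m g2) = 0) sequentially"
  proof (clarify)
    fix g1 g2 assume "g1 \<in> G" "g2 \<in> G"
    then obtain b where b: "(h g1 * h g2) ^ b *s (h g2 *s m g1 - h g1 *s m g2) = 0"
      using frac_on_compatible \<gamma> by blast
    have "(h g1 * h g2) ^ B *s (h g2 *s m g1 - h g1 *s m g2) = 0" if "b \<le> B" for B
      using b that by (metis le_add_diff_inverse power_add scale_scale scale_zero_right mult.commute)
    then show "eventually (\<lambda>B. (h g1 * h g2) ^ B *s (h g2 *s m g1 - h g1 *s m g2) = 0) sequentially"
      by (auto simp: eventually_sequentially)
  qed
  then have "eventually (\<lambda>B. \<forall>(g1, g2)\<in>G \<times> G.
      (h g1 * h g2) ^ B *s (h g2 *s m g1 - h g1 *s m g2) = 0) sequentially"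
    using \<open>finite G\<close> by (intro eventually_ball_finite) (auto simp: case_prod_beta)
  then show ?thesis unfolding eventually_sequentially by blast
qed

lemma frac_on_loc_smul:
  assumes \<gamma>: "frac_on scale \<gamma> {h} m h" and n: "h ^ Suc B *s n = r *s (h ^ B *s m)"
  shows "frac_on scale (\<lambda>q. loc_smul scale q r (\<gamma> q)) {h} n 1"
  unfolding frac_on_def
proof (intro allI impI, elim conjE)
  fix q assume q: "prime_ring_ideal q" "\<not> {h} \<subseteq> q"
  then have "h \<notin> q" by simp
  then have "h ^ Suc B \<notin> q" using q(1) by (metis prime_ring_ideal_power_notin)
  have "h ^ Suc B *s (r *s m) = h *s (r *s (h ^ B *s m))"
    by (simp add: ac_simps)
  also have "\<dots> = h ^ Suc B *s (h *s n)"
    by (simp only: n[symmetric]) (simp add: ac_simps)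
  finally have "h ^ Suc B *s (1 *s (r *s m) - h *s n) = 0"
    by (simp only: scale_diff_eq_0_iff scale_one)
  then have "loc_frac scale q (r *s m) h = loc_frac scale q n 1"
    by (rule loc_frac_eqI[OF q(1) \<open>h \<notin> q\<close> prime_ring_ideal_one_notin[OF q(1)] \<open>h ^ Suc B \<notin> q\<close>])
  then show "1 \<notin> q \<and> loc_smul scale q r (\<gamma> q) = loc_frac scale q n 1"
    using \<gamma> q \<open>h \<notin> q\<close> prime_ring_ideal_one_notin by (auto simp: frac_on_def loc_smul_loc_frac)
qed

lemma glue_fractions:
  assumes "finite G" and \<gamma>: "\<And>g. g \<in> G \<Longrightarrow> frac_on scale \<gamma> {h g} (m g) (h g)"
  shows "\<exists>B. \<forall>r\<in>rmod.span ((\<lambda>g. h g ^ Suc B) ` G). \<exists>n. \<forall>g\<in>G.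
           frac_on scale (\<lambda>q. loc_smul scale q r (\<gamma> q)) {h g} n 1"
proof -
  obtain B where B: "\<And>g1 g2. g1 \<in> G \<Longrightarrow> g2 \<in> G \<Longrightarrow>
      (h g1 * h g2) ^ B *s (h g2 *s m g1 - h g1 *s m g2) = 0"
    using frac_on_uniformly_compatible[where h = h and m = m and \<gamma> = \<gamma>, OF assms] by blast
  have compatible: "h g1 ^ Suc B *s (h g2 ^ B *s m g2) = h g2 ^ Suc B *s (h g1 ^ B *s m g1)"
    if "g1 \<in> G" "g2 \<in> G" for g1 g2
  proof -
    have "h g1 ^ Suc B *s (h g2 ^ B *s m g2) = (h g1 * h g2) ^ B *s (h g1 *s m g2)"
      by (simp add: power_mult_distrib ac_simps)
    also have "\<dots> = (h g1 * h g2) ^ B *s (h g2 *s m g1)"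
      using B[OF that] by (simp only: scale_diff_eq_0_iff)
    also have "\<dots> = h g2 ^ Suc B *s (h g1 ^ B *s m g1)"
      by (simp add: power_mult_distrib ac_simps)
    finally show ?thesis .
  qed
  have "\<exists>n. \<forall>g\<in>G. frac_on scale (\<lambda>q. loc_smul scale q r (\<gamma> q)) {h g} n 1"
    if r: "r \<in> rmod.span ((\<lambda>g. h g ^ Suc B) ` G)" for r
  proof -
    obtain n where "\<forall>g\<in>G. h g ^ Suc B *s n = r *s (h g ^ B *s m g)"
      using compatible_family_glue[where e = "\<lambda>g. h g ^ Suc B" and y = "\<lambda>g. h g ^ B *s m g",
          OF compatible r] by blast
    then show ?thesis using \<gamma> frac_on_loc_smul by blast
  qed
  then show ?thesis by blast
qed

lemma fractions_on_cover_torsion: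
  assumes "noetherian_ring TYPE('a)" "ring_ideal I" "finite G"
    and \<gamma>: "\<And>g. g \<in> G \<Longrightarrow> frac_on scale \<gamma> {h g} (m g) (h g)"
    and cover: "\<And>q. prime_ring_ideal q \<Longrightarrow> \<not> I \<subseteq> q \<Longrightarrow> \<exists>g\<in>G. h g \<notin> q"
  shows "\<exists>k. \<forall>r\<in>ideal_pow I k. \<exists>n. frac_on scale (\<lambda>q. loc_smul scale q r (\<gamma> q)) I n 1"
proof -
  obtain B where B: "\<And>r. r \<in> rmod.span ((\<lambda>g. h g ^ Suc B) ` G) \<Longrightarrow> \<exists>n. \<forall>g\<in>G.
      frac_on scale (\<lambda>q. loc_smul scale q r (\<gamma> q)) {h g} n 1"
    using glue_fractions[where h = h and m = m and \<gamma> = \<gamma>, OF \<open>finite G\<close> \<gamma>] by blast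
  have "I \<subseteq> q" if q: "prime_ring_ideal q" "rmod.span ((\<lambda>g. h g ^ Suc B) ` G) \<subseteq> q" for q
  proof (rule ccontr)
    assume "\<not> I \<subseteq> q"
    then obtain g where "g \<in> G" "h g ^ Suc B \<notin> q"
      using cover[OF q(1)] prime_ring_ideal_power_iff[OF q(1)] by blast
    then show False using q(2) rmod.span_superset by blast
  qed
  then obtain k where k: "ideal_pow I k \<subseteq> rmod.span ((\<lambda>g. h g ^ Suc B) ` G)"
    using ideal_pow_subset_if_primes[OF assms(1,2)] by (metis ring_ideal_span)
  have "\<exists>n. frac_on scale (\<lambda>q. loc_smul scale q r (\<gamma> q)) I n 1" if r: "r \<in> ideal_pow I k" for r
  proof -
    obtain n where n: "\<forall>g\<in>G. frac_on scale (\<lambda>q. loc_smul scale q r (\<gamma> q)) {h g} n 1"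
      using B k r by blast
    have "frac_on scale (\<lambda>q. loc_smul scale q r (\<gamma> q)) I n 1"
      unfolding frac_on_def
    proof (intro allI impI, elim conjE)
      fix q assume q: "prime_ring_ideal q" "\<not> I \<subseteq> q"
      then obtain g where "g \<in> G" "h g \<notin> q" using cover by blast
      then show "1 \<notin> q \<and> loc_smul scale q r (\<gamma> q) = loc_frac scale q n 1"
        using n q(1) unfolding frac_on_def by simp
    qed
    then show ?thesis ..
  qed
  then show ?thesis by blast
qed

lemma locally_fractional_torsion:
  assumes noeth: "noetherian_ring TYPE('a)" and "ring_ideal I"
    and cover: "\<And>q. prime_ring_ideal q \<Longrightarrow> \<not> I \<subseteq> q \<Longrightarrow>
      \<exists>J m s. \<not> J \<subseteq> q \<and> frac_on scale \<gamma> J m s"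
  shows "\<exists>k. \<forall>r\<in>ideal_pow I k. \<exists>n. frac_on scale (\<lambda>q. loc_smul scale q r (\<gamma> q)) I n 1"
proof -
  define S where "S = {g. \<exists>m s. frac_on scale \<gamma> {g} m s}"
  have S_cover: "\<not> rmod.span S \<subseteq> q" if q: "prime_ring_ideal q" "\<not> I \<subseteq> q" for q
  proof -
    obtain J m s g where "frac_on scale \<gamma> J m s" "g \<in> J" "g \<notin> q"
      using cover[OF q] by blast
    then have "g \<in> S" unfolding S_def by (blast intro: frac_on_subset)
    then show ?thesis using \<open>g \<notin> q\<close> rmod.span_superset by blast
  qed
  obtain G where G: "finite G" "G \<subseteq> S" "rmod.span G = rmod.span S"
    using noetherian_span_finite_subset[OF noeth] by blast
  have "\<forall>g\<in>G. \<exists>a m. frac_on scale \<gamma> {g ^ Suc a} m (g ^ Suc a)"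
    using G(2) frac_on_power_denominator unfolding S_def by blast
  then obtain a m where am: "\<And>g. g \<in> G \<Longrightarrow> frac_on scale \<gamma> {g ^ Suc (a g)} (m g) (g ^ Suc (a g))"
    by metis
  show ?thesis
  proof (rule fractions_on_cover_torsion[OF noeth \<open>ring_ideal I\<close> G(1) am])
    fix q assume q: "prime_ring_ideal q" "\<not> I \<subseteq> q"
    have "\<not> G \<subseteq> q"
      using S_cover[OF q] G(3) span_subset_ideal_iff[OF prime_ring_ideal_ideal[OF q(1)]] by metis
    then obtain g where "g \<in> G" "g \<notin> q" by blast
    then show "\<exists>g\<in>G. g ^ Suc (a g) \<notin> q" using q(1) prime_ring_ideal_power_iff by blast
  qed
qed

lemma colon_ring_ideal:
  assumes "subspace L"
  shows "ring_ideal (colon scale L)"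
  unfolding ring_ideal_def colon_def
proof (intro conjI ballI allI; clarsimp)
  show "0 \<in> L" using assms by (rule subspace_0)
  show "(a + b) *s m \<in> L" if "\<forall>m. a *s m \<in> L" "\<forall>m. b *s m \<in> L" for a b m
    using assms that by (simp add: scale_left_distrib subspace_add)
  show "(r * a) *s m \<in> L" if "\<forall>m. a *s m \<in> L" for r a m
    using assms that by (metis scale_scale subspace_scale)
qed

lemma colon_prime_submodule:
  assumes "prime_submodule scale P"
  shows "prime_ring_ideal (colon scale P)"
proof -
  have P: "subspace P" "P \<noteq> UNIV" "\<And>r m. r *s m \<in> P \<Longrightarrow> r \<in> colon scale P \<or> m \<in> P"
    using assms unfolding prime_submodule_def by auto
  have "1 \<notin> colon scale P" using P(2) unfolding colon_def by auto
  moreover have "a \<in> colon scale P \<or> b \<in> colon scale P" if ab: "a * b \<in> colon scale P" for a b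
  proof (cases "a \<in> colon scale P")
    case False
    then have "b *s m \<in> P" for m
      using P(3)[of a "b *s m"] ab unfolding colon_def by auto
    then show ?thesis unfolding colon_def by blast
  qed simp
  ultimately show ?thesis
    unfolding prime_ring_ideal_def using colon_ring_ideal[OF P(1)] by blast
qed

lemma prime_ideal_eq_colon:
  assumes "faithful_mod scale" "primeful scale" "Spec_mod scale \<noteq> {}" and q: "prime_ring_ideal q"
  shows "\<exists>P\<in>Spec_mod scale. colon scale P = q"
proof -
  obtain P where "P \<in> Spec_mod scale" using assms(3) by blast
  then have P: "subspace P" "P \<noteq> UNIV" unfolding Spec_mod_def prime_submodule_def by auto
  have nontrivial: "(UNIV :: 'b set) \<noteq> {0}"
  proof
    assume trivial: "(UNIV :: 'b set) = {0}"
    have "x \<in> P" for x :: 'b using subspace_0[OF P(1)] trivial by (metis UNIV_I singletonD)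
    then show False using P(2) by blast
  qed
  have "0 \<in> q" using prime_ring_ideal_ideal[OF q] unfolding ring_ideal_def by blast
  then have "ann scale \<subseteq> q" using assms(1) unfolding faithful_mod_def by simp
  with assms(2) q nontrivial show ?thesis unfolding primeful_def by blast
qed

lemma Supp_open_complement_Vset:
  assumes "p \<in> Supp_open scale (Spec_mod scale - Vset scale K)"
  shows "prime_ring_ideal p \<and> \<not> colon scale K \<subseteq> p"
proof -
  obtain P where "P \<in> Spec_mod scale" "P \<notin> Vset scale K" "p = colon scale P"
    using assms unfolding Supp_open_def by blast
  then show ?thesis unfolding Spec_mod_def Vset_def by (auto intro: colon_prime_submodule)
qed

lemma sect_smul_eq_eps_map:
  assumes "frac_on scN (\<lambda>q. loc_smul scN q r (\<gamma> q)) (colon scale K) n 1"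
  shows "sect_smul scN scale (Spec_mod scale - Vset scale K) r \<gamma> =
    eps_map scN scale (Spec_mod scale - Vset scale K) n"
proof
  fix p
  show "sect_smul scN scale (Spec_mod scale - Vset scale K) r \<gamma> p =
      eps_map scN scale (Spec_mod scale - Vset scale K) n p"
    using assms Supp_open_complement_Vset[of p K]
    unfolding sect_smul_def eps_map_def frac_on_def by auto
qed

lemma A_sections_locally_frac:
  assumes colon_onto: "\<And>q. prime_ring_ideal q \<Longrightarrow> \<exists>P\<in>Spec_mod scale. colon scale P = q"
    and \<gamma>: "\<gamma> \<in> A_sections scN scale (Spec_mod scale - Vset scale K)"
    and q: "prime_ring_ideal q" "\<not> colon scale K \<subseteq> q"
  shows "\<exists>J m s. \<not> J \<subseteq> q \<and> frac_on scN \<gamma> J m s"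
proof -
  obtain P where P: "P \<in> Spec_mod scale" "colon scale P = q" using colon_onto[OF q(1)] by blast
  then have "P \<in> Spec_mod scale - Vset scale K" using q(2) unfolding Vset_def by blast
  then obtain W s m where W: "zariski_open scale W" "P \<in> W"
    and frac: "\<forall>P'\<in>W. s \<notin> colon scale P' \<and> \<gamma> (colon scale P') = loc_frac scN (colon scale P') m s"
    using \<gamma> unfolding A_sections_def mem_Collect_eq by metis
  then obtain L where L: "W = Spec_mod scale - Vset scale L" unfolding zariski_open_def by blast
  have "\<not> colon scale L \<subseteq> q" using W(2) P unfolding L Vset_def by blast
  moreover have "frac_on scN \<gamma> (colon scale L) m s"
    unfolding frac_on_def
  proof (intro allI impI, elim conjE)
    fix q' assume "prime_ring_ideal q'" "\<not> colon scale L \<subseteq> q'"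
    moreover obtain P' where "P' \<in> Spec_mod scale" "colon scale P' = q'"
      using colon_onto[OF \<open>prime_ring_ideal q'\<close>] by blast
    ultimately have "P' \<in> W" "colon scale P' = q'" unfolding L Vset_def by auto
    then show "s \<notin> q' \<and> \<gamma> q' = loc_frac scN q' m s" using frac by blast
  qed
  ultimately show ?thesis by blast
qed

end

theorem proposition3p11:
  fixes scM :: "'r::comm_ring_1 \<Rightarrow> 'm::ab_group_add \<Rightarrow> 'm"
    and scN :: "'r \<Rightarrow> 'n::ab_group_add \<Rightarrow> 'n"
    and K :: "'m set"
  assumes "noetherian_ring TYPE('r)"
    and "module scM" and "module scN"
    and "faithful_mod scM" and "primeful scM"
    and "Spec_mod scM \<noteq> {}"
    and "module.subspace scM K"
  shows "coker_eps_torsion scN scM (Spec_mod scM - Vset scM K) (colon scM K)"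
  unfolding coker_eps_torsion_def
proof
  interpret M: module scM by fact
  interpret N: module scN by fact
  fix \<gamma> assume \<gamma>: "\<gamma> \<in> A_sections scN scM (Spec_mod scM - Vset scM K)"
  have "\<And>q. prime_ring_ideal q \<Longrightarrow> \<not> colon scM K \<subseteq> q \<Longrightarrow>
      \<exists>J m s. \<not> J \<subseteq> q \<and> frac_on scN \<gamma> J m s"
    using M.A_sections_locally_frac[OF M.prime_ideal_eq_colon[OF assms(4-6)] \<gamma>] .
  then obtain k where k: "\<And>r. r \<in> ideal_pow (colon scM K) k \<Longrightarrow>
      \<exists>n. frac_on scN (\<lambda>q. loc_smul scN q r (\<gamma> q)) (colon scM K) n 1"
    using N.locally_fractional_torsion[OF assms(1) M.colon_ring_ideal[OF assms(7)]] by blast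
  have "sect_smul scN scM (Spec_mod scM - Vset scM K) r \<gamma>
      \<in> range (eps_map scN scM (Spec_mod scM - Vset scM K))"
    if "r \<in> ideal_pow (colon scM K) k" for r
    using k[OF that] M.sect_smul_eq_eps_map by blast
  then show "\<exists>k. \<forall>r\<in>ideal_pow (colon scM K) k. sect_smul scN scM (Spec_mod scM - Vset scM K) r \<gamma>
      \<in> range (eps_map scN scM (Spec_mod scM - Vset scM K))"
    by blast
qed

end
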